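(* Let $p$ be a prime with $p\equiv 5\pmod 8$, and let $$U(k)=\binom{p-2}{k}_{2,2}+2^{p-1-k}\binom{p-2}{p-1-k}_{2,2}.$$ Then $U\!\left(\frac{p-1}{2}\right)\equiv 0\pmod p$.
   Context: For $n\in\mathbb N$ and $b,c\in\mathbb Z$, the generalized trinomial coefficients $\binom{n}{k}_{b,c}$ ($k\in\mathbb Z$) are the integers defined by $\left(x+b+\frac{c}{x}\right)^n=\sum_{k\in\mathbb Z}\binom{n}{k}_{b,c}x^k$. *)

theory Defs
  imports Main "HOL-Computational_Algebra.Primes"
begin

text \<open>Generalized trinomial coefficient: the coefficient of x^k in (x + b + c/x)^n.
  Expanding, a term with i factors x, j factors c/x and n-i-j factors b contributes
  (n choose i) * ((n-i) choose j) * b^(n-i-j) * c^j * x^(i-j).\<close>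
definition gtrinom :: "nat \<Rightarrow> int \<Rightarrow> int \<Rightarrow> int \<Rightarrow> int" where
  "gtrinom n k b c =
     (\<Sum>i\<le>n. \<Sum>j\<le>n - i.
        if int i - int j = k
        then int (n choose i) * int ((n - i) choose j) * b ^ (n - i - j) * c ^ j
        else 0)"

end

theory Submission
  imports Defs "HOL-Number_Theory.Number_Theory"
begin

text \<open>At the midpoint \<open>k = (p - 1)/2\<close> we have \<open>p - 1 - k = k\<close>, so \<open>U k\<close> is the trinomial
  coefficient at \<open>k\<close> times \<open>1 + 2^((p-1)/2)\<close>.  For \<open>p \<equiv> 5 (mod 8)\<close>, 2 is a quadratic
  non-residue, i.e. \<open>2^((p-1)/2) \<equiv> -1 (mod p)\<close>.  This follows from Gauss's lemma: among the
  residues \<open>2x\<close>, \<open>0 < x \<le> (p-1)/2\<close>, exactly \<open>(p-1)/2 - \<lfloor>(p-1)/4\<rfloor>\<close> exceed \<open>(p-1)/2\<close>,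
  and this count is odd when \<open>p \<equiv> 5 (mod 8)\<close>.\<close>

lemma two_power_half_cong:
  fixes p :: nat
  assumes "prime p" and "2 < p"
  shows "[(2::int) ^ ((p - 1) div 2) = (-1) ^ ((p - 1) div 2 - (p - 1) div 4)] (mod int p)"
proof -
  interpret G: GAUSS p 2
    using assms by unfold_locales (auto simp: cong_def)
  define n where "n = (p - 1) div 2"
  have half_eq: "(int p - 1) div 2 = int n"
    using assms(2) unfolding n_def by linarith
  have "G.C = (\<lambda>x. 2 * x) ` G.A"
    unfolding G.C_def G.B_def image_image
  proof (rule image_cong[OF refl])
    fix x assume "x \<in> G.A"
    then show "x * 2 mod int p = 2 * x"
      unfolding G.A_def by auto
  qed
  then have "G.E = (\<lambda>x. 2 * x) ` {int n div 2<..int n}"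
    unfolding G.E_def G.A_def half_eq by (auto simp: image_iff)
  then have "card G.E = n - n div 2"
    by (simp add: card_image inj_on_def zdiv_int[symmetric] of_nat_diff[symmetric] del: of_nat_diff)
  moreover have "n div 2 = (p - 1) div 4"
    unfolding n_def by (simp add: div_mult2_eq)
  ultimately show ?thesis
    using G.pre_gauss_lemma unfolding half_eq n_def by simp
qed

lemma two_power_half_cong_minus_one:
  fixes p :: nat
  assumes "prime p" and "p mod 8 = 5"
  shows "[(2::int) ^ ((p - 1) div 2) = -1] (mod int p)"
proof -
  obtain m where "p = 8 * m + 5"
    using assms(2) by (metis div_mod_decomp mult.commute)
  then have "odd ((p - 1) div 2 - (p - 1) div 4)"
    by simp
  then show ?thesis
    using two_power_half_cong[OF assms(1)] assms(2) by simp
qed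

theorem mainTheorem9:
  fixes p :: nat
  assumes "prime p" and "p mod 8 = 5"
  defines "U \<equiv> (\<lambda>k::int. gtrinom (p - 2) k 2 2
                 + 2 ^ nat (int p - 1 - k) * gtrinom (p - 2) (int p - 1 - k) 2 2)"
  shows "U (int ((p - 1) div 2)) mod int p = 0"
proof -
  define h where "h = (p - 1) div 2"
  define T where "T = gtrinom (p - 2) (int h) 2 2"
  have "int p - 1 - int h = int h"
    using assms(2) unfolding h_def by presburger
  then have "U (int h) = T * (1 + 2 ^ h)"
    unfolding U_def T_def by (simp add: algebra_simps)
  also have "[T * (1 + 2 ^ h) = T * (1 + -1)] (mod int p)"
    unfolding h_def
    by (intro cong_mult cong_add cong_refl two_power_half_cong_minus_one assms)
  finally show ?thesis
    unfolding h_def by (simp add: cong_def)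
qed

end
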